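(* Let $f:\mathbb{R}^n\times\mathbb{R}^p\to[-\infty,\infty]$ be a proper nearly convex function and $F:\mathbb{R}^n\rightrightarrows\mathbb{R}^p$ a nearly convex set-valued mapping such that $\operatorname{ri}(\operatorname{dom} f)\cap\operatorname{ri}(\operatorname{gph} F)\neq\emptyset$. Then the optimal value function $\mu(x)=\inf\{f(x,y): y\in F(x)\}$, $x\in\mathbb{R}^n$ (with $\inf\emptyset=\infty$), is nearly convex.
   Context: A set $\Omega\subset\mathbb{R}^k$ is nearly convex if there is a convex set $C$ with $C\subset\Omega\subset\overline{C}$. For an arbitrary set $\Omega$, $\operatorname{ri}\Omega=\{a\in\Omega:\exists\delta>0,\ B(a;\delta)\cap\operatorname{aff}\Omega\subset\Omega\}$. For $f:\mathbb{R}^k\to[-\infty,\infty]$: $\operatorname{dom} f=\{x:f(x)<\infty\}$, $\operatorname{epi} f=\{(x,\lambda):f(x)\le\lambda\}$; $f$ is nearly convex if $\operatorname{epi} f$ is nearly convex and proper if $\operatorname{dom} f\neq\emptyset$ and $f>-\infty$ everywhere. For $F:\mathbb{R}^n\rightrightarrows\mathbb{R}^p$, $\operatorname{gph} F=\{(x,y):y\in F(x)\}$, and $F$ is nearly convex if $\operatorname{gph}F$ is nearly convex. *)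

theory Defs
  imports "HOL-Analysis.Analysis" "HOL-Library.Extended_Real"
begin

definition nearly_convex :: "'a::euclidean_space set \<Rightarrow> bool" where
  "nearly_convex \<Omega> \<longleftrightarrow> (\<exists>C. convex C \<and> C \<subseteq> \<Omega> \<and> \<Omega> \<subseteq> closure C)"

definition ri :: "'a::euclidean_space set \<Rightarrow> 'a set" where
  "ri \<Omega> = {a \<in> \<Omega>. \<exists>\<delta>>0. ball a \<delta> \<inter> affine hull \<Omega> \<subseteq> \<Omega>}"

definition edom :: "('a \<Rightarrow> ereal) \<Rightarrow> 'a set" where
  "edom f = {x. f x < \<infinity>}"

definition epi :: "('a \<Rightarrow> ereal) \<Rightarrow> ('a \<times> real) set" where
  "epi f = {(x, t). f x \<le> ereal t}"

definition nearly_convex_fun :: "('a::euclidean_space \<Rightarrow> ereal) \<Rightarrow> bool" where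
  "nearly_convex_fun f \<longleftrightarrow> nearly_convex (epi f)"

definition proper_fun :: "('a \<Rightarrow> ereal) \<Rightarrow> bool" where
  "proper_fun f \<longleftrightarrow> edom f \<noteq> {} \<and> (\<forall>x. f x \<noteq> -\<infinity>)"

definition gph :: "('a \<Rightarrow> 'b set) \<Rightarrow> ('a \<times> 'b) set" where
  "gph F = {(x, y). y \<in> F x}"

definition nearly_convex_map :: "('a::euclidean_space \<Rightarrow> 'b::euclidean_space set) \<Rightarrow> bool" where
  "nearly_convex_map F \<longleftrightarrow> nearly_convex (gph F)"

text \<open>Optimal value function; Inf of the empty set of ereal is \<infinity>.\<close>
definition optimal_value :: "('a \<times> 'b \<Rightarrow> ereal) \<Rightarrow> ('a \<Rightarrow> 'b set) \<Rightarrow> 'a \<Rightarrow> ereal" where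
  "optimal_value f F x = Inf {f (x, y) | y. y \<in> F x}"

lemma Inf_empty_ereal: "Inf ({} :: ereal set) = \<infinity>" by (simp add: top_ereal_def)

end

theory Submission
  imports Defs
begin

text \<open>The epigraph of \<open>\<mu>\<close> lies between the projection \<open>((x, y), t) \<mapsto> (x, t)\<close> of
  \<open>epi f \<inter> (gph F \<times> \<real>)\<close> and its closure. A nearly convex set has the relative interior of
  any convex core, so nearly convex sets are preserved by linear images, products, and
  intersections whose relative interiors meet; the qualification condition is exactly what
  makes the last step apply to \<open>epi f\<close> and \<open>gph F \<times> \<real>\<close>.\<close>

lemma affine_hull_eq_if_between_closure:
  fixes C :: "'a::euclidean_space set"
  assumes "C \<subseteq> S" "S \<subseteq> closure C"
  shows "affine hull S = affine hull C"
proof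
  show "affine hull S \<subseteq> affine hull C"
    using hull_mono[OF assms(2), of affine] by simp
  show "affine hull C \<subseteq> affine hull S" using hull_mono[OF assms(1)] .
qed

lemma ri_eq_rel_interior_if_between_closure:
  fixes C :: "'a::euclidean_space set"
  assumes "convex C" "C \<subseteq> S" "S \<subseteq> closure C"
  shows "ri S = rel_interior C"
proof
  have hull_eq: "affine hull S = affine hull C"
    using affine_hull_eq_if_between_closure assms(2,3) .
  show "ri S \<subseteq> rel_interior C"
  proof
    fix a assume "a \<in> ri S"
    then obtain d where "a \<in> S" "d > 0" "ball a d \<inter> affine hull S \<subseteq> S"
      unfolding ri_def by auto
    then have "a \<in> rel_interior (closure C)"
      unfolding mem_rel_interior_ball using hull_eq assms(3) by auto
    then show "a \<in> rel_interior C" using convex_rel_interior_closure[OF assms(1)] by simp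
  qed
  show "rel_interior C \<subseteq> ri S"
  proof
    fix a assume "a \<in> rel_interior C"
    then obtain d where "a \<in> C" "d > 0" "ball a d \<inter> affine hull C \<subseteq> C"
      unfolding mem_rel_interior_ball by auto
    then show "a \<in> ri S" unfolding ri_def using hull_eq assms(2) by auto
  qed
qed

lemma ri_convex: "convex S \<Longrightarrow> ri S = rel_interior S"
  using ri_eq_rel_interior_if_between_closure closure_subset by blast

lemma convex_imp_nearly_convex: "convex S \<Longrightarrow> nearly_convex S"
  unfolding nearly_convex_def using closure_subset by blast

lemma nearly_convex_if_between_closure:
  assumes "nearly_convex A" "A \<subseteq> B" "B \<subseteq> closure A"
  shows "nearly_convex B"
proof -
  obtain C where C: "convex C" "C \<subseteq> A" "A \<subseteq> closure C"
    using assms(1) unfolding nearly_convex_def by blast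
  have "B \<subseteq> closure C"
    using assms(3) closure_minimal[OF C(3) closed_closure] by blast
  then show ?thesis unfolding nearly_convex_def using C assms(2) by blast
qed

lemma nearly_convex_linear_image:
  fixes g :: "'a::euclidean_space \<Rightarrow> 'b::euclidean_space"
  assumes "linear g" "nearly_convex S"
  shows "nearly_convex (g ` S)" "ri (g ` S) = g ` ri S"
proof -
  obtain C where C: "convex C" "C \<subseteq> S" "S \<subseteq> closure C"
    using assms(2) unfolding nearly_convex_def by blast
  have "g ` S \<subseteq> g ` closure C" using C(3) by blast
  also have "\<dots> \<subseteq> closure (g ` C)" by (rule closure_linear_image_subset[OF assms(1)])
  finally have image: "convex (g ` C)" "g ` C \<subseteq> g ` S" "g ` S \<subseteq> closure (g ` C)"
    using convex_linear_image[OF assms(1) C(1)] C(2) by blast+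
  then show "nearly_convex (g ` S)" unfolding nearly_convex_def by blast
  show "ri (g ` S) = g ` ri S"
    using ri_eq_rel_interior_if_between_closure[OF image] ri_eq_rel_interior_if_between_closure[OF C]
      rel_interior_convex_linear_image[OF assms(1) C(1)] by simp
qed

lemma nearly_convex_Times:
  fixes S :: "'a::euclidean_space set" and T :: "'b::euclidean_space set"
  assumes "nearly_convex S" "nearly_convex T"
  shows "nearly_convex (S \<times> T)" "ri (S \<times> T) = ri S \<times> ri T"
proof -
  obtain C where C: "convex C" "C \<subseteq> S" "S \<subseteq> closure C"
    using assms(1) unfolding nearly_convex_def by blast
  obtain D where D: "convex D" "D \<subseteq> T" "T \<subseteq> closure D"
    using assms(2) unfolding nearly_convex_def by blast
  have core: "convex (C \<times> D)" "C \<times> D \<subseteq> S \<times> T" "S \<times> T \<subseteq> closure (C \<times> D)"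
    using convex_Times[OF C(1) D(1)] C D by (auto simp: closure_Times)
  then show "nearly_convex (S \<times> T)" unfolding nearly_convex_def by blast
  show "ri (S \<times> T) = ri S \<times> ri T"
    using ri_eq_rel_interior_if_between_closure[OF core] ri_eq_rel_interior_if_between_closure[OF C]
      ri_eq_rel_interior_if_between_closure[OF D] rel_interior_Times[OF C(1) D(1)] by simp
qed

lemma nearly_convex_Int:
  fixes S T :: "'a::euclidean_space set"
  assumes "nearly_convex S" "nearly_convex T" "ri S \<inter> ri T \<noteq> {}"
  shows "nearly_convex (S \<inter> T)"
proof -
  obtain C where C: "convex C" "C \<subseteq> S" "S \<subseteq> closure C"
    using assms(1) unfolding nearly_convex_def by blast
  obtain D where D: "convex D" "D \<subseteq> T" "T \<subseteq> closure D"
    using assms(2) unfolding nearly_convex_def by blast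
  have "rel_interior C \<inter> rel_interior D \<noteq> {}"
    using assms(3) ri_eq_rel_interior_if_between_closure[OF C]
      ri_eq_rel_interior_if_between_closure[OF D] by simp
  then have "closure (C \<inter> D) = closure C \<inter> closure D"
    using closure_Inter_convex[of "{C, D}"] C(1) D(1) by auto
  then have "S \<inter> T \<subseteq> closure (C \<inter> D)" using C(3) D(3) by blast
  moreover have "convex (C \<inter> D)" using C(1) D(1) by (rule convex_Int)
  ultimately show ?thesis unfolding nearly_convex_def using C(2) D(2) by blast
qed

lemma edom_eq_fst_epi: "edom f = fst ` epi f"
proof
  show "edom f \<subseteq> fst ` epi f"
  proof
    fix z assume "z \<in> edom f"
    then obtain r where "f z \<le> ereal r"
      unfolding edom_def by (cases "f z") (auto intro: order_refl)
    then have "(z, r) \<in> epi f" unfolding epi_def by simp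
    then show "z \<in> fst ` epi f" by force
  qed
  show "fst ` epi f \<subseteq> edom f"
    unfolding epi_def edom_def by auto
qed

lemma Pair_mem_closure_if_above:
  fixes A :: "('a::metric_space \<times> real) set"
  assumes "\<And>e. e > 0 \<Longrightarrow> (x, s + e) \<in> A"
  shows "(x, s) \<in> closure A"
  unfolding closure_approachable
proof (intro allI impI)
  fix e :: real assume "e > 0"
  then have "(x, s + e/2) \<in> A" "dist (x, s + e/2) (x, s) < e"
    using assms by (auto simp: dist_Pair_Pair dist_real_def)
  then show "\<exists>u\<in>A. dist u (x, s) < e" by blast
qed

definition drop_middle :: "('a \<times> 'b) \<times> real \<Rightarrow> 'a \<times> real" where
  "drop_middle = (\<lambda>((x, y), t). (x, t))"

lemma linear_drop_middle: "linear drop_middle"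
  unfolding drop_middle_def by (rule linearI) (auto simp: case_prod_beta)

lemma drop_middle_constraint_subset_epi_optimal_value:
  "drop_middle ` (epi f \<inter> (gph F \<times> UNIV)) \<subseteq> epi (optimal_value f F)"
proof
  fix w assume "w \<in> drop_middle ` (epi f \<inter> (gph F \<times> UNIV))"
  then obtain x y t where w: "w = (x, t)" "f (x, y) \<le> ereal t" "y \<in> F x"
    unfolding drop_middle_def epi_def gph_def by auto
  then have "optimal_value f F x \<le> f (x, y)"
    unfolding optimal_value_def by (blast intro: Inf_lower)
  then show "w \<in> epi (optimal_value f F)"
    using w unfolding epi_def by auto
qed

lemma epi_optimal_value_subset_closure:
  fixes f :: "'a::metric_space \<times> 'b \<Rightarrow> ereal"
  shows "epi (optimal_value f F) \<subseteq> closure (drop_middle ` (epi f \<inter> (gph F \<times> UNIV)))"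
proof
  fix w assume "w \<in> epi (optimal_value f F)"
  then obtain x s where w: "w = (x, s)" "optimal_value f F x \<le> ereal s"
    unfolding epi_def by auto
  have "(x, s + e) \<in> drop_middle ` (epi f \<inter> (gph F \<times> UNIV))" if "e > 0" for e
  proof -
    have "optimal_value f F x < ereal (s + e)"
      using w(2) that by (simp add: le_less_trans)
    then obtain y where "y \<in> F x" "f (x, y) < ereal (s + e)"
      unfolding optimal_value_def by (auto simp: Inf_less_iff)
    then have "((x, y), s + e) \<in> epi f \<inter> (gph F \<times> UNIV)"
      unfolding epi_def gph_def by auto
    then show ?thesis unfolding drop_middle_def by force
  qed
  then show "w \<in> closure (drop_middle ` (epi f \<inter> (gph F \<times> UNIV)))"
    unfolding w(1) by (rule Pair_mem_closure_if_above)
qed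

theorem theorem5p2:
  fixes f :: "'n::euclidean_space \<times> 'p::euclidean_space \<Rightarrow> ereal"
    and F :: "'n \<Rightarrow> 'p set"
  assumes "proper_fun f" and "nearly_convex_fun f"
    and "nearly_convex_map F"
    and "ri (edom f) \<inter> ri (gph F) \<noteq> {}"
  shows "nearly_convex_fun (optimal_value f F)"
proof -
  have epi: "nearly_convex (epi f)"
    using assms(2) unfolding nearly_convex_fun_def .
  have UNIV: "nearly_convex (UNIV :: real set)" "ri (UNIV :: real set) = UNIV"
    by (simp_all add: convex_imp_nearly_convex ri_convex)
  note gph_Times = nearly_convex_Times[OF assms(3)[unfolded nearly_convex_map_def] UNIV(1)]
  have gph: "nearly_convex (gph F \<times> (UNIV :: real set))"
    using gph_Times(1) .
  have "ri (gph F \<times> (UNIV :: real set)) = ri (gph F) \<times> UNIV"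
    using gph_Times(2) UNIV(2) by simp
  moreover have "ri (edom f) = fst ` ri (epi f)"
    using edom_eq_fst_epi nearly_convex_linear_image(2)[OF linear_fst epi] by metis
  ultimately have "ri (epi f) \<inter> ri (gph F \<times> UNIV) \<noteq> {}"
    using assms(4) by force
  then have "nearly_convex (drop_middle ` (epi f \<inter> (gph F \<times> UNIV)))"
    by (intro nearly_convex_linear_image(1) linear_drop_middle nearly_convex_Int epi gph)
  then show ?thesis
    unfolding nearly_convex_fun_def
    by (rule nearly_convex_if_between_closure[OF _ drop_middle_constraint_subset_epi_optimal_value
          epi_optimal_value_subset_closure])
qed

end
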